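(* In every interval liminf game, positional strategies suffice: if a player (Eve or Adam) wins the game, then that player has a positional winning strategy.
   Context: A game graph is a tuple $G=(V,V_\exists,E,w,q_0)$ where $(V,E)$ is a finite directed graph in which every vertex has an outgoing edge, $w:E\to\mathbb{Z}$ is an integer edge-weight function, $V_\exists\subseteq V$ are Eve's vertices (the rest are Adam's), and $q_0\in V$ is the initial vertex. A play is an infinite path $v_0v_1\cdots$ with $v_0=q_0$. A strategy for a player maps finite play prefixes ending in one of that player's vertices to a successor vertex; it is positional (memoryless) if it depends only on the last vertex of the prefix. The liminf payoff of a play is $\liminf_{i\to\infty} w(v_i,v_{i+1})$. An interval liminf game is a pair $(G,I)$ with $I$ a finite union of real intervals; a play is winning for Eve iff its liminf payoff lies in $I$, and winning for Adam otherwise. A player wins the game if they have a strategy such that all plays consistent with it are winning for them. *)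

theory Defs
  imports "HOL-Analysis.Analysis" "HOL-Library.Extended_Real"
begin

definition game_graph :: "'v set \<Rightarrow> 'v set \<Rightarrow> ('v \<times> 'v) set \<Rightarrow> ('v \<times> 'v \<Rightarrow> int) \<Rightarrow> 'v \<Rightarrow> bool" where
  "game_graph V VE E w q0 \<longleftrightarrow> finite V \<and> VE \<subseteq> V \<and> E \<subseteq> V \<times> V
     \<and> (\<forall>v\<in>V. \<exists>u. (v, u) \<in> E) \<and> q0 \<in> V"

definition is_play :: "('v \<times> 'v) set \<Rightarrow> 'v \<Rightarrow> (nat \<Rightarrow> 'v) \<Rightarrow> bool" where
  "is_play E q0 p \<longleftrightarrow> p 0 = q0 \<and> (\<forall>i. (p i, p (Suc i)) \<in> E)"

definition is_prefix :: "('v \<times> 'v) set \<Rightarrow> 'v \<Rightarrow> 'v list \<Rightarrow> bool" where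
  "is_prefix E q0 h \<longleftrightarrow> h \<noteq> [] \<and> hd h = q0 \<and> (\<forall>i. Suc i < length h \<longrightarrow> (h ! i, h ! Suc i) \<in> E)"

definition is_strategy :: "('v \<times> 'v) set \<Rightarrow> 'v \<Rightarrow> 'v set \<Rightarrow> ('v list \<Rightarrow> 'v) \<Rightarrow> bool" where
  "is_strategy E q0 P \<sigma> \<longleftrightarrow> (\<forall>h. is_prefix E q0 h \<and> last h \<in> P \<longrightarrow> (last h, \<sigma> h) \<in> E)"

definition positional :: "('v list \<Rightarrow> 'v) \<Rightarrow> bool" where
  "positional \<sigma> \<longleftrightarrow> (\<exists>f. \<forall>h. h \<noteq> [] \<longrightarrow> \<sigma> h = f (last h))"

definition consistent :: "'v set \<Rightarrow> ('v list \<Rightarrow> 'v) \<Rightarrow> (nat \<Rightarrow> 'v) \<Rightarrow> bool" where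
  "consistent P \<sigma> p \<longleftrightarrow> (\<forall>i. p i \<in> P \<longrightarrow> p (Suc i) = \<sigma> (map p [0..<Suc i]))"

text \<open>Liminf payoff of a play (weights are bounded, so the liminf is finite).\<close>
definition liminf_payoff :: "('v \<times> 'v \<Rightarrow> int) \<Rightarrow> (nat \<Rightarrow> 'v) \<Rightarrow> ereal" where
  "liminf_payoff w p = Liminf sequentially (\<lambda>i. ereal (real_of_int (w (p i, p (Suc i)))))"

definition finite_union_of_intervals :: "real set \<Rightarrow> bool" where
  "finite_union_of_intervals I \<longleftrightarrow> (\<exists>F. finite F \<and> (\<forall>S\<in>F. is_interval S) \<and> I = \<Union>F)"

definition eve_winning_strategy where
  "eve_winning_strategy V VE E w q0 I \<sigma> \<longleftrightarrow> is_strategy E q0 VE \<sigma> \<and>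
     (\<forall>p. is_play E q0 p \<and> consistent VE \<sigma> p \<longrightarrow> liminf_payoff w p \<in> ereal ` I)"

definition adam_winning_strategy where
  "adam_winning_strategy V VE E w q0 I \<tau> \<longleftrightarrow> is_strategy E q0 (V - VE) \<tau> \<and>
     (\<forall>p. is_play E q0 p \<and> consistent (V - VE) \<tau> p \<longrightarrow> liminf_payoff w p \<notin> ereal ` I)"

end

theory Submission
  imports Defs
begin

text \<open>Positional determinacy is proved for every finite arena and every set of winning liminf
  values, by Zielonka's induction on the number of edges. Let \<open>m\<close> be the least weight and \<open>b\<close> the
  player for whom liminf \<open>m\<close> is winning; remove \<open>b\<close>'s attractor \<open>A\<close> to the \<open>m\<close>-edges and solve the
  smaller subarena. If the opponent wins nowhere there, \<open>b\<close> wins everywhere: a play either takes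
  \<open>m\<close>-edges infinitely often, or eventually avoids \<open>A\<close> and is won in the subarena. Otherwise the
  opponent's winning region \<open>D\<close> there is a dominion of the whole arena (no vertex of \<open>b\<close> outside
  \<open>A\<close> has an edge into \<open>A\<close>), and removing the opponent's attractor to \<open>D\<close> leaves
  another smaller arena. Finally, a player with any winning strategy from \<open>q0\<close> must own the
  positional winning region of \<open>q0\<close>: otherwise the play against the opponent's positional
  strategy is lost.\<close>

definition path_in :: "('v \<times> 'v) set \<Rightarrow> (nat \<Rightarrow> 'v) \<Rightarrow> bool" where
  "path_in F p \<longleftrightarrow> (\<forall>i. (p i, p (Suc i)) \<in> F)"

definition arena :: "('v \<times> 'v) set \<Rightarrow> 'v set \<Rightarrow> bool" where
  "arena F U \<longleftrightarrow> finite F \<and> F \<subseteq> U \<times> U \<and> (\<forall>u\<in>U. \<exists>x. (u, x) \<in> F)"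

definition subarena :: "('v \<times> 'v) set \<Rightarrow> 'v set \<Rightarrow> ('v \<times> 'v) set \<Rightarrow> ('v \<times> 'v) set" where
  "subarena F A T = {e \<in> F. fst e \<notin> A \<and> snd e \<notin> A \<and> e \<notin> T}"

lemma path_in_shift: "path_in F p \<Longrightarrow> path_in F (\<lambda>i. p (i + j))"
  unfolding path_in_def by (metis add_Suc)

text \<open>Player \<open>True\<close> is Eve and \<open>False\<close> is Adam; \<open>S\<close> is the set of liminf values winning for
  Eve. Strategies here are positional from the outset: functions on vertices.\<close>

locale liminf_arena =
  fixes VE :: "'v set" and w :: "'v \<times> 'v \<Rightarrow> int" and S :: "int set"
begin

definition owns :: "bool \<Rightarrow> 'v \<Rightarrow> bool" where
  "owns b u \<longleftrightarrow> (u \<in> VE) = b"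

lemma owns_Not [simp]: "owns (\<not> b) u \<longleftrightarrow> \<not> owns b u"
  unfolding owns_def by auto

definition liminf_weight :: "(nat \<Rightarrow> 'v) \<Rightarrow> int \<Rightarrow> bool" where
  "liminf_weight p k \<longleftrightarrow> (\<exists>\<^sub>F i in sequentially. w (p i, p (Suc i)) = k)
     \<and> (\<forall>\<^sub>F i in sequentially. k \<le> w (p i, p (Suc i)))"

definition won :: "bool \<Rightarrow> (nat \<Rightarrow> 'v) \<Rightarrow> bool" where
  "won b p \<longleftrightarrow> (\<exists>k. liminf_weight p k \<and> (k \<in> S) = b)"

definition follows :: "bool \<Rightarrow> ('v \<Rightarrow> 'v) \<Rightarrow> 'v set \<Rightarrow> (nat \<Rightarrow> 'v) \<Rightarrow> bool" where
  "follows b s W p \<longleftrightarrow> (\<forall>i. p i \<in> W \<longrightarrow> owns b (p i) \<longrightarrow> p (Suc i) = s (p i))"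

definition confines :: "bool \<Rightarrow> ('v \<times> 'v) set \<Rightarrow> 'v set \<Rightarrow> ('v \<Rightarrow> 'v) \<Rightarrow> bool" where
  "confines b F W s \<longleftrightarrow> (\<forall>u\<in>W. owns b u \<longrightarrow> (u, s u) \<in> F \<and> s u \<in> W)
     \<and> (\<forall>u\<in>W. \<not> owns b u \<longrightarrow> (\<forall>x. (u, x) \<in> F \<longrightarrow> x \<in> W))"

definition dominion :: "bool \<Rightarrow> ('v \<times> 'v) set \<Rightarrow> 'v set \<Rightarrow> ('v \<Rightarrow> 'v) \<Rightarrow> bool" where
  "dominion b F W s \<longleftrightarrow> confines b F W s
     \<and> (\<forall>p. path_in F p \<longrightarrow> p 0 \<in> W \<longrightarrow> follows b s W p \<longrightarrow> won b p)"

definition pos_determined :: "('v \<times> 'v) set \<Rightarrow> 'v set \<Rightarrow> bool" where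
  "pos_determined F U \<longleftrightarrow>
     (\<exists>W W' s s'. W \<union> W' = U \<and> dominion True F W s \<and> dominion False F W' s')"

lemma pos_determined_iff:
  "pos_determined F U \<longleftrightarrow> (\<exists>W W' s s'. W \<union> W' = U \<and> dominion b F W s \<and> dominion (\<not> b) F W' s')"
  unfolding pos_determined_def by (cases b) (auto simp: Un_commute)

lemma dominion_empty: "dominion b F {} s"
  unfolding dominion_def confines_def by simp

lemma liminf_weight_shift: "liminf_weight (\<lambda>i. p (i + j)) k \<longleftrightarrow> liminf_weight p k"
  unfolding liminf_weight_def frequently_def
  using eventually_sequentially_seg[of "\<lambda>i. w (p i, p (Suc i)) \<noteq> k" j]
    eventually_sequentially_seg[of "\<lambda>i. k \<le> w (p i, p (Suc i))" j]
  by simp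

lemma won_shift: "won b (\<lambda>i. p (i + j)) \<Longrightarrow> won b p"
  unfolding won_def liminf_weight_shift .

lemma won_if_min_weight_frequent:
  assumes "\<forall>i. m \<le> w (p i, p (Suc i))" "\<exists>\<^sub>F i in sequentially. w (p i, p (Suc i)) = m"
    and "(m \<in> S) = b"
  shows "won b p"
  unfolding won_def liminf_weight_def using assms by auto

lemma follows_shift: "follows b s W p \<Longrightarrow> follows b s W (\<lambda>i. p (i + j))"
  unfolding follows_def by (metis add_Suc)

lemma confines_stay:
  assumes "confines b F W s" "path_in F p" "p 0 \<in> W" "follows b s W p"
  shows "p i \<in> W"
proof (induction i)
  case 0
  show ?case using assms(3) .
next
  case (Suc i)
  then show ?case using assms unfolding confines_def follows_def path_in_def by metis
qed

text \<open>Attractors are taken to a set \<open>T\<close> of edges rather than vertices: \<open>attr c F T\<close> is where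
  \<open>c\<close> can force the play to take an edge of \<open>T\<close>.\<close>

definition cpre :: "bool \<Rightarrow> ('v \<times> 'v) set \<Rightarrow> ('v \<times> 'v) set \<Rightarrow> 'v set \<Rightarrow> 'v set" where
  "cpre c F T X = {u. (owns c u \<and> (\<exists>x. (u, x) \<in> F \<and> ((u, x) \<in> T \<or> x \<in> X)))
     \<or> (\<not> owns c u \<and> (\<exists>x. (u, x) \<in> F) \<and> (\<forall>x. (u, x) \<in> F \<longrightarrow> (u, x) \<in> T \<or> x \<in> X))}"

definition attr_level :: "bool \<Rightarrow> ('v \<times> 'v) set \<Rightarrow> ('v \<times> 'v) set \<Rightarrow> nat \<Rightarrow> 'v set" where
  "attr_level c F T n = (cpre c F T ^^ n) {}"

definition attr :: "bool \<Rightarrow> ('v \<times> 'v) set \<Rightarrow> ('v \<times> 'v) set \<Rightarrow> 'v set" where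
  "attr c F T = (\<Union>n. attr_level c F T n)"

text \<open>Choosing a successor of the least possible level makes the level strictly decrease
  along plays until an edge of \<open>T\<close> is taken.\<close>

definition attr_strategy :: "bool \<Rightarrow> ('v \<times> 'v) set \<Rightarrow> ('v \<times> 'v) set \<Rightarrow> 'v \<Rightarrow> 'v" where
  "attr_strategy c F T u = (SOME x. (u, x) \<in> F
     \<and> ((u, x) \<in> T \<or> x \<in> attr_level c F T (LEAST n. u \<in> attr_level c F T (Suc n))))"

lemma cpre_mono: "X \<subseteq> Y \<Longrightarrow> cpre c F T X \<subseteq> cpre c F T Y"
  unfolding cpre_def by blast

lemma attr_level_0 [simp]: "attr_level c F T 0 = {}"
  unfolding attr_level_def by simp

lemma attr_level_Suc: "attr_level c F T (Suc n) = cpre c F T (attr_level c F T n)"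
  unfolding attr_level_def by simp

lemma attr_level_mono: "n \<le> k \<Longrightarrow> attr_level c F T n \<subseteq> attr_level c F T k"
proof -
  have "attr_level c F T n \<subseteq> attr_level c F T (Suc n)" for n
    by (induction n) (simp_all add: attr_level_Suc cpre_mono)
  then show "n \<le> k \<Longrightarrow> ?thesis" by (rule lift_Suc_mono_le)
qed

lemma attr_subset_Domain: "attr c F T \<subseteq> Domain F"
proof -
  have "attr_level c F T n \<subseteq> Domain F" for n
    by (cases n) (auto simp: attr_level_Suc cpre_def)
  then show ?thesis unfolding attr_def by blast
qed

lemma attr_Suc_level: "u \<in> attr c F T \<Longrightarrow> \<exists>n. u \<in> attr_level c F T (Suc n)"
  unfolding attr_def by (metis UN_E attr_level_0 empty_iff not0_implies_Suc)

lemma eventually_in_attr_level: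
  assumes "x \<in> attr c F T"
  shows "\<forall>\<^sub>F n in sequentially. x \<in> attr_level c F T n"
proof -
  obtain k where "x \<in> attr_level c F T k" using assms unfolding attr_def by blast
  then have "\<forall>n\<ge>k. x \<in> attr_level c F T n" using attr_level_mono by blast
  then show ?thesis unfolding eventually_sequentially by blast
qed

lemma cpre_attr_subset:
  assumes "finite F"
  shows "cpre c F T (attr c F T) \<subseteq> attr c F T"
proof
  fix u assume u: "u \<in> cpre c F T (attr c F T)"
  have reach: "\<forall>\<^sub>F n in sequentially. (u, x) \<in> T \<or> x \<in> attr_level c F T n"
    if "(u, x) \<in> T \<or> x \<in> attr c F T" for x
  proof (cases "(u, x) \<in> T")
    case False
    then show ?thesis
      using eventually_in_attr_level[of x c F T] that by (simp add: eventually_mono)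
  qed simp
  have "\<forall>\<^sub>F n in sequentially. u \<in> cpre c F T (attr_level c F T n)"
  proof (cases "owns c u")
    case True
    then obtain x where x: "(u, x) \<in> F" "(u, x) \<in> T \<or> x \<in> attr c F T"
      using u unfolding cpre_def by auto
    show ?thesis
      using reach[OF x(2)] by (rule eventually_mono) (use x True in \<open>auto simp: cpre_def\<close>)
  next
    case False
    have "{x. (u, x) \<in> F} = F `` {u}" by blast
    then have "finite {x. (u, x) \<in> F}" using finite_Image[OF assms] by simp
    moreover have "\<forall>x\<in>{x. (u, x) \<in> F}. \<forall>\<^sub>F n in sequentially. (u, x) \<in> T \<or> x \<in> attr_level c F T n"
      using u False reach unfolding cpre_def by simp
    ultimately have "\<forall>\<^sub>F n in sequentially. \<forall>x\<in>{x. (u, x) \<in> F}. (u, x) \<in> T \<or> x \<in> attr_level c F T n"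
      by (rule eventually_ball_finite)
    then show ?thesis
      by (rule eventually_mono) (use u False in \<open>auto simp: cpre_def\<close>)
  qed
  then show "u \<in> attr c F T"
    unfolding attr_def eventually_sequentially attr_level_Suc[symmetric] by blast
qed

lemma attr_escape:
  assumes "finite F" "u \<notin> attr c F T"
  shows "owns c u \<Longrightarrow> (u, x) \<in> F \<Longrightarrow> (u, x) \<notin> T \<and> x \<notin> attr c F T"
    and "\<not> owns c u \<Longrightarrow> (u, y) \<in> F \<Longrightarrow> \<exists>x. (u, x) \<in> F \<and> (u, x) \<notin> T \<and> x \<notin> attr c F T"
  using cpre_attr_subset[OF assms(1), of c T] assms(2) unfolding cpre_def by blast+

lemma attr_strategy_level:
  assumes "u \<in> attr_level c F T (Suc n)" "owns c u"
  shows "(u, attr_strategy c F T u) \<in> F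
    \<and> ((u, attr_strategy c F T u) \<in> T \<or> attr_strategy c F T u \<in> attr_level c F T n)"
proof -
  define r where "r = (LEAST n. u \<in> attr_level c F T (Suc n))"
  have "u \<in> attr_level c F T (Suc r)" "r \<le> n"
    unfolding r_def using assms(1) by (auto intro: LeastI Least_le)
  have "\<exists>x. (u, x) \<in> F \<and> ((u, x) \<in> T \<or> x \<in> attr_level c F T r)"
    using \<open>u \<in> attr_level c F T (Suc r)\<close> assms(2) by (auto simp: attr_level_Suc cpre_def)
  then have "(u, attr_strategy c F T u) \<in> F
      \<and> ((u, attr_strategy c F T u) \<in> T \<or> attr_strategy c F T u \<in> attr_level c F T r)"
    unfolding attr_strategy_def r_def[symmetric] by (rule someI_ex)
  then show ?thesis using attr_level_mono[OF \<open>r \<le> n\<close>] by blast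
qed

lemma attr_strategy_step:
  assumes "u \<in> attr c F T" "owns c u"
  shows "(u, attr_strategy c F T u) \<in> F
    \<and> ((u, attr_strategy c F T u) \<in> T \<or> attr_strategy c F T u \<in> attr c F T)"
  using attr_Suc_level[OF assms(1)] attr_strategy_level[OF _ assms(2)] unfolding attr_def by blast

lemma attr_opponent_step:
  assumes "u \<in> attr c F T" "\<not> owns c u" "(u, x) \<in> F"
  shows "(u, x) \<in> T \<or> x \<in> attr c F T"
  using attr_Suc_level[OF assms(1)] assms(2,3) unfolding attr_def
  by (auto simp: attr_level_Suc cpre_def)

lemma attr_reaches:
  assumes "path_in F p" "p 0 \<in> attr c F T" "follows c (attr_strategy c F T) (attr c F T - X) p"
  shows "\<exists>i. p i \<in> X \<or> (p i, p (Suc i)) \<in> T"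
proof -
  obtain n where "p 0 \<in> attr_level c F T n"
    using assms(2) unfolding attr_def by blast
  then show ?thesis
    using assms(1,3)
  proof (induction n arbitrary: p)
    case 0
    then show ?case by simp
  next
    case (Suc n)
    have "p 1 \<in> attr_level c F T n" if "p 0 \<notin> X" "(p 0, p 1) \<notin> T"
    proof (cases "owns c (p 0)")
      case True
      have "p 0 \<in> attr c F T" using Suc.prems(1) unfolding attr_def by blast
      then have "p 1 = attr_strategy c F T (p 0)"
        using Suc.prems(3) True that(1) unfolding follows_def by auto
      then show ?thesis using attr_strategy_level[OF Suc.prems(1) True] that(2) by simp
    next
      case False
      then show ?thesis
        using Suc.prems(1,2) that(2) unfolding path_in_def by (auto simp: attr_level_Suc cpre_def)
    qed
    moreover have "\<exists>i. p (i + 1) \<in> X \<or> (p (i + 1), p (Suc i + 1)) \<in> T"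
      if "p 1 \<in> attr_level c F T n"
      using Suc.IH[of "\<lambda>i. p (i + 1)"] that path_in_shift[OF Suc.prems(2), of 1]
        follows_shift[OF Suc.prems(3), of 1] by simp
    ultimately show ?case by (metis One_nat_def add_Suc_right add_0_right)
  qed
qed

lemma confines_subset_attr:
  assumes "confines c F D s" "D \<subseteq> Domain F"
  shows "D \<subseteq> attr c F {e \<in> F. snd e \<in> D}"
proof
  fix u assume u: "u \<in> D"
  have "u \<in> cpre c F {e \<in> F. snd e \<in> D} {}"
  proof (cases "owns c u")
    case True
    then have "(u, s u) \<in> F \<and> s u \<in> D" using assms(1) u unfolding confines_def by blast
    then show ?thesis using True unfolding cpre_def by auto
  next
    case False
    then have "\<forall>x. (u, x) \<in> F \<longrightarrow> x \<in> D" using assms(1) u unfolding confines_def by blast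
    moreover have "\<exists>x. (u, x) \<in> F" using assms(2) u by blast
    ultimately show ?thesis using False unfolding cpre_def by auto
  qed
  then have "u \<in> attr_level c F {e \<in> F. snd e \<in> D} (Suc 0)"
    by (simp add: attr_level_Suc)
  then show "u \<in> attr c F {e \<in> F. snd e \<in> D}"
    unfolding attr_def by blast
qed

lemma arena_subarena:
  assumes "arena F U"
  shows "arena (subarena F (attr c F T) T) (U - attr c F T)"
proof -
  have fin: "finite F" and FU: "F \<subseteq> U \<times> U" using assms unfolding arena_def by auto
  have "\<exists>x. (u, x) \<in> subarena F (attr c F T) T" if u: "u \<in> U" "u \<notin> attr c F T" for u
  proof -
    obtain y where y: "(u, y) \<in> F" using assms u(1) unfolding arena_def by blast
    obtain x where "(u, x) \<in> F" "(u, x) \<notin> T" "x \<notin> attr c F T"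
    proof (cases "owns c u")
      case True
      then show thesis using that attr_escape(1)[OF fin u(2) True y] y by blast
    next
      case False
      then show thesis using that attr_escape(2)[OF fin u(2) False y] by blast
    qed
    then show ?thesis using u(2) unfolding subarena_def by auto
  qed
  moreover have "subarena F (attr c F T) T \<subseteq> (U - attr c F T) \<times> (U - attr c F T)"
    using FU unfolding subarena_def by auto
  moreover have "finite (subarena F (attr c F T) T)"
    using fin unfolding subarena_def by simp
  ultimately show ?thesis unfolding arena_def by blast
qed

text \<open>The opponent of \<open>c\<close> cannot be forced out of the complement of \<open>c\<close>'s attractor, so a
  dominion of the opponent in the subarena is one in the whole arena.\<close>

lemma dominion_subarena_lift:
  assumes fin: "finite F" and dom: "dominion (\<not> c) (subarena F (attr c F T) T) W s"
    and disj: "W \<inter> attr c F T = {}"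
  shows "dominion (\<not> c) F W s"
proof -
  let ?F' = "subarena F (attr c F T) T"
  have conf': "confines (\<not> c) ?F' W s" using dom dominion_def by blast
  have escape: "(u, x) \<in> ?F'" if "u \<in> W" "owns c u" "(u, x) \<in> F" for u x
  proof -
    have "u \<notin> attr c F T" using that(1) disj by blast
    then show ?thesis using attr_escape(1)[OF fin _ that(2,3)] that(3) unfolding subarena_def by simp
  qed
  have own: "(u, s u) \<in> ?F' \<and> s u \<in> W" if "u \<in> W" "\<not> owns c u" for u
    using conf' that unfolding confines_def by simp
  have conf: "confines (\<not> c) F W s"
    unfolding confines_def
  proof (rule conjI; intro ballI impI allI)
    fix u assume "u \<in> W" "owns (\<not> c) u"
    then show "(u, s u) \<in> F \<and> s u \<in> W" using own unfolding subarena_def by simp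
  next
    fix u x assume "u \<in> W" "\<not> owns (\<not> c) u" "(u, x) \<in> F"
    then show "x \<in> W" using escape conf' unfolding confines_def by simp
  qed
  show ?thesis unfolding dominion_def
  proof (intro conjI conf allI impI)
    fix p assume p: "path_in F p" "p 0 \<in> W" "follows (\<not> c) s W p"
    have inW: "p i \<in> W" for i using confines_stay[OF conf p] .
    have "(p i, p (Suc i)) \<in> ?F'" for i
    proof (cases "owns c (p i)")
      case True
      then show ?thesis using escape inW p(1) unfolding path_in_def by blast
    next
      case False
      then show ?thesis using own inW p(3) unfolding follows_def by simp
    qed
    then show "won (\<not> c) p" using dom p(2,3) unfolding dominion_def path_in_def by blast
  qed
qed

lemma confines_attr_union:
  assumes conf: "confines c (subarena F A T) W s" and A: "A = attr c F T"
    and T: "snd ` T \<subseteq> A \<union> W"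
    and t: "\<forall>u\<in>A. owns c u \<longrightarrow> (u, t u) \<in> F \<and> ((u, t u) \<in> T \<or> t u \<in> A)"
  shows "confines c F (A \<union> W) (\<lambda>u. if u \<in> A then t u else s u)"
proof -
  have T_target: "x \<in> A \<union> W" if "(u, x) \<in> T" for u x
  proof -
    have "x \<in> snd ` T" using that by (rule rev_image_eqI) simp
    then show ?thesis using T by blast
  qed
  show ?thesis
  unfolding confines_def
proof (rule conjI; intro ballI impI allI)
  fix u assume u: "u \<in> A \<union> W" "owns c u"
  show "(u, if u \<in> A then t u else s u) \<in> F \<and> (if u \<in> A then t u else s u) \<in> A \<union> W"
  proof (cases "u \<in> A")
    case True
    then show ?thesis using t u(2) T_target by auto
  next
    case False
    then have "(u, s u) \<in> subarena F A T \<and> s u \<in> W" using conf u unfolding confines_def by blast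
    then show ?thesis using False unfolding subarena_def by simp
  qed
next
  fix u x assume u: "u \<in> A \<union> W" "\<not> owns c u" and x: "(u, x) \<in> F"
  have "(u, x) \<in> T \<or> x \<in> A \<or> x \<in> W"
  proof (cases "u \<in> A")
    case True
    then show ?thesis using attr_opponent_step[of u c F T x] u(2) x A by blast
  next
    case False
    then have "u \<in> W" using u(1) by blast
    moreover have "(u, x) \<in> subarena F A T" if "(u, x) \<notin> T" "x \<notin> A"
      using that x False unfolding subarena_def by simp
    ultimately show ?thesis using u(2) conf unfolding confines_def by blast
  qed
  then show "x \<in> A \<union> W" using T_target by blast
qed
qed

text \<open>A play either takes \<open>m\<close>-edges infinitely often or, since the attractor strategy forces an
  \<open>m\<close>-edge, eventually stays out of the attractor.\<close>

lemma dominion_min_weight_attr: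
  assumes arena: "arena F U" and min: "\<forall>e\<in>F. m \<le> w e" and b: "(m \<in> S) = b"
    and T: "T = {e \<in> F. w e = m}" and A: "A = attr b F T"
    and sub: "dominion b (subarena F A T) (U - A) s"
  shows "dominion b F U (\<lambda>u. if u \<in> A then attr_strategy b F T u else s u)" (is "dominion b F U ?\<sigma>")
proof -
  have FU: "F \<subseteq> U \<times> U" using arena arena_def by blast
  have AU: "A \<subseteq> U" using attr_subset_Domain[of b F T] FU A by blast
  have "confines b F (A \<union> (U - A)) ?\<sigma>"
  proof (rule confines_attr_union[OF _ A])
    show "confines b (subarena F A T) (U - A) s" using sub dominion_def by blast
    show "snd ` T \<subseteq> A \<union> (U - A)" using T FU by auto
    show "\<forall>u\<in>A. owns b u \<longrightarrow> (u, attr_strategy b F T u) \<in> F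
        \<and> ((u, attr_strategy b F T u) \<in> T \<or> attr_strategy b F T u \<in> A)"
      using attr_strategy_step A by blast
  qed
  moreover have "A \<union> (U - A) = U" using AU by blast
  ultimately have conf: "confines b F U ?\<sigma>" by simp
  show ?thesis unfolding dominion_def
  proof (intro conjI conf allI impI)
    fix p assume p: "path_in F p" "p 0 \<in> U" "follows b ?\<sigma> U p"
    have inU: "p i \<in> U" for i using confines_stay[OF conf p] .
    show "won b p"
    proof (cases "\<exists>\<^sub>F i in sequentially. w (p i, p (Suc i)) = m")
      case True
      then show ?thesis using won_if_min_weight_frequent[OF _ _ b] min p(1) unfolding path_in_def by blast
    next
      case False
      then obtain N where N: "\<And>i. N \<le> i \<Longrightarrow> w (p i, p (Suc i)) \<noteq> m"
        unfolding not_frequently eventually_sequentially by blast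
      have outA: "p i \<notin> A" if "N \<le> i" for i
      proof
        assume "p i \<in> A"
        then have "p (0 + i) \<in> attr b F T" using A by simp
        moreover have "follows b (attr_strategy b F T) (attr b F T - {}) (\<lambda>k. p (k + i))"
          using p(3) inU A unfolding follows_def by auto
        ultimately have "\<exists>k. p (k + i) \<in> {} \<or> (p (k + i), p (Suc k + i)) \<in> T"
          by (rule attr_reaches[OF path_in_shift[OF p(1)]])
        then obtain k where "(p (k + i), p (Suc k + i)) \<in> T" by blast
        then show False using N[of "k + i"] T that by simp
      qed
      have "path_in (subarena F A T) (\<lambda>i. p (i + N))"
        using p(1) outA N T unfolding path_in_def subarena_def by auto
      moreover have "follows b s (U - A) (\<lambda>i. p (i + N))"
        using p(3) outA unfolding follows_def by auto
      ultimately have "won b (\<lambda>i. p (i + N))"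
        using sub inU outA unfolding dominion_def by simp
      then show ?thesis by (rule won_shift)
    qed
  qed
qed

text \<open>A play entering the attractor is forced into \<open>D\<close>, where \<open>s\<close> wins; a play avoiding it
  stays in the subarena.\<close>

lemma dominion_attr_union:
  assumes D: "dominion c F D s" and T: "T = {e \<in> F. snd e \<in> D}" and A: "A = attr c F T"
    and DA: "D \<subseteq> A" and sub: "dominion c (subarena F A T) W s'"
  shows "dominion c F (A \<union> W)
    (\<lambda>u. if u \<in> A then (if u \<in> D then s u else attr_strategy c F T u) else s' u)"
    (is "dominion c F _ ?\<sigma>")
proof -
  have confD: "confines c F D s" using D dominion_def by blast
  have conf: "confines c F (A \<union> W) ?\<sigma>"
  proof (rule confines_attr_union[OF _ A])
    show "confines c (subarena F A T) W s'" using sub dominion_def by blast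
    show "snd ` T \<subseteq> A \<union> W" using T DA by auto
    show "\<forall>u\<in>A. owns c u \<longrightarrow> (u, if u \<in> D then s u else attr_strategy c F T u) \<in> F
        \<and> ((u, if u \<in> D then s u else attr_strategy c F T u) \<in> T
           \<or> (if u \<in> D then s u else attr_strategy c F T u) \<in> A)"
      using attr_strategy_step[of _ c F T] confD A T unfolding confines_def by auto
  qed
  show ?thesis unfolding dominion_def
  proof (intro conjI conf allI impI)
    fix p assume p: "path_in F p" "p 0 \<in> A \<union> W" "follows c ?\<sigma> (A \<union> W) p"
    have inR: "p i \<in> A \<union> W" for i using confines_stay[OF conf p] .
    have step: "p (Suc i) = ?\<sigma> (p i)" if "owns c (p i)" for i
      using p(3) inR that unfolding follows_def by blast
    have won_from_D: "won c p" if "p j \<in> D" for j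
    proof -
      have "follows c s D (\<lambda>i. p (i + j))"
        using step DA unfolding follows_def by auto
      then have "won c (\<lambda>i. p (i + j))"
        using D path_in_shift[OF p(1)] that unfolding dominion_def by simp
      then show ?thesis by (rule won_shift)
    qed
    show "won c p"
    proof (cases "\<exists>j. p j \<in> A")
      case True
      then obtain j where "p (0 + j) \<in> attr c F T" using A by auto
      moreover have "follows c (attr_strategy c F T) (attr c F T - D) (\<lambda>k. p (k + j))"
        using step A unfolding follows_def by auto
      ultimately have "\<exists>k. p (k + j) \<in> D \<or> (p (k + j), p (Suc k + j)) \<in> T"
        by (rule attr_reaches[OF path_in_shift[OF p(1)]])
      then obtain k where "p (k + j) \<in> D \<or> (p (k + j), p (Suc k + j)) \<in> T" by blast
      then show ?thesis using won_from_D T by auto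
    next
      case False
      then have "path_in (subarena F A T) p"
        using p(1) T DA unfolding path_in_def subarena_def by auto
      moreover have "follows c s' W p"
        using step False unfolding follows_def by auto
      ultimately show ?thesis
        using sub p(2) False unfolding dominion_def by blast
    qed
  qed
qed

lemma pos_determined_by_dominion:
  assumes arena: "arena F U" and IH: "\<And>F' U'. F' \<subset> F \<Longrightarrow> arena F' U' \<Longrightarrow> pos_determined F' U'"
    and D: "dominion c F D s" "D \<subseteq> U" "D \<noteq> {}"
  shows "pos_determined F U"
proof -
  define T where "T = {e \<in> F. snd e \<in> D}"
  define A where "A = attr c F T"
  have FU: "F \<subseteq> U \<times> U" and fin: "finite F" using arena arena_def by auto
  have "D \<subseteq> Domain F" using arena D(2) unfolding arena_def by blast
  then have DA: "D \<subseteq> A"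
    using confines_subset_attr D(1) unfolding A_def T_def dominion_def by blast
  obtain u x where "u \<in> D" "(u, x) \<in> F" using D(2,3) arena unfolding arena_def by blast
  then have "(u, x) \<notin> subarena F A T" using DA unfolding subarena_def by auto
  with \<open>(u, x) \<in> F\<close> have "subarena F A T \<subset> F" unfolding subarena_def by blast
  then have "pos_determined (subarena F A T) (U - A)"
    using IH arena_subarena[OF arena, of c T, folded A_def] by blast
  then obtain W W' t t' where W: "W \<union> W' = U - A"
    and t: "dominion c (subarena F A T) W t" and t': "dominion (\<not> c) (subarena F A T) W' t'"
    unfolding pos_determined_iff[of _ _ c] by blast
  have "dominion c F (A \<union> W)
      (\<lambda>u. if u \<in> A then (if u \<in> D then s u else attr_strategy c F T u) else t u)"
    using dominion_attr_union[OF D(1) T_def A_def DA t] .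
  moreover have "dominion (\<not> c) F W' t'"
    using dominion_subarena_lift[OF fin] t' W unfolding A_def by blast
  moreover have "(A \<union> W) \<union> W' = U"
    using W attr_subset_Domain[of c F T] FU unfolding A_def by blast
  ultimately show ?thesis unfolding pos_determined_iff[of F U c] by blast
qed

lemma pos_determined_by_min_weight:
  assumes arena: "arena F U" and "F \<noteq> {}"
    and IH: "\<And>F' U'. F' \<subset> F \<Longrightarrow> arena F' U' \<Longrightarrow> pos_determined F' U'"
  shows "pos_determined F U"
proof -
  have fin: "finite F" using arena arena_def by blast
  define m where "m = Min (w ` F)"
  have min: "\<forall>e\<in>F. m \<le> w e" unfolding m_def using fin by simp
  have "m \<in> w ` F" unfolding m_def using fin \<open>F \<noteq> {}\<close> by simp
  then obtain e0 where e0: "e0 \<in> F" "w e0 = m" by blast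
  define b where "b = (m \<in> S)"
  define T where "T = {e \<in> F. w e = m}"
  define A where "A = attr b F T"
  have "e0 \<notin> subarena F A T" using e0 unfolding subarena_def T_def by simp
  with e0 have "subarena F A T \<subset> F" unfolding subarena_def by blast
  then have "pos_determined (subarena F A T) (U - A)"
    using IH arena_subarena[OF arena, of b T, folded A_def] by blast
  then obtain W W' s s' where W: "W \<union> W' = U - A"
    and s: "dominion b (subarena F A T) W s" and s': "dominion (\<not> b) (subarena F A T) W' s'"
    unfolding pos_determined_iff[of _ _ b] by blast
  show ?thesis
  proof (cases "W' = {}")
    case True
    then have "dominion b F U (\<lambda>u. if u \<in> A then attr_strategy b F T u else s u)"
      using dominion_min_weight_attr[OF arena min _ T_def A_def] s W b_def by simp
    then show ?thesis
      unfolding pos_determined_iff[of F U b] using dominion_empty[of "\<not> b" F] by blast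
  next
    case False
    have "dominion (\<not> b) F W' s'"
      using dominion_subarena_lift[OF fin] s' W unfolding A_def by blast
    moreover have "W' \<subseteq> U" using W by blast
    ultimately show ?thesis using pos_determined_by_dominion[OF arena IH] False by blast
  qed
qed

theorem arena_pos_determined: "arena F U \<Longrightarrow> pos_determined F U"
proof -
  assume "arena F U"
  then have "finite F" unfolding arena_def by blast
  then show ?thesis using \<open>arena F U\<close>
  proof (induction F arbitrary: U rule: finite_psubset_induct)
    case (psubset F)
    show ?case
    proof (cases "F = {}")
      case True
      then have "U = {}" using psubset.prems unfolding arena_def by auto
      then show ?thesis using dominion_empty unfolding pos_determined_def by blast
    next
      case False
      then show ?thesis by (rule pos_determined_by_min_weight[OF psubset.prems _ psubset.IH])
    qed
  qed
qed

lemma liminf_payoff_eq: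
  assumes "liminf_weight p k"
  shows "liminf_payoff w p = ereal (real_of_int k)"
proof -
  define f where "f i = ereal (real_of_int (w (p i, p (Suc i))))" for i
  have freq: "\<exists>\<^sub>F i in sequentially. f i = ereal (real_of_int k)"
    and ev: "\<forall>\<^sub>F i in sequentially. ereal (real_of_int k) \<le> f i"
    using assms unfolding liminf_weight_def f_def by auto
  have "ereal (real_of_int k) \<le> Liminf sequentially f"
    using Liminf_mono[OF ev] by (simp add: Liminf_const)
  moreover have "\<not> ereal (real_of_int k) < Liminf sequentially f"
  proof
    assume "ereal (real_of_int k) < Liminf sequentially f"
    then have "\<forall>\<^sub>F i in sequentially. ereal (real_of_int k) < f i"
      using less_LiminfD by blast
    then have "\<forall>\<^sub>F i in sequentially. f i \<noteq> ereal (real_of_int k)"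
      by (rule eventually_mono) auto
    then show False using freq unfolding frequently_def by blast
  qed
  ultimately show ?thesis unfolding liminf_payoff_def f_def[symmetric] by simp
qed

end

lemma is_prefix_snoc:
  assumes "is_prefix E q0 h" "(last h, x) \<in> E"
  shows "is_prefix E q0 (h @ [x])"
  unfolding is_prefix_def
proof (intro conjI allI impI)
  show "h @ [x] \<noteq> []" by simp
  show "hd (h @ [x]) = q0" using assms(1) unfolding is_prefix_def by simp
  fix i assume i: "Suc i < length (h @ [x])"
  show "((h @ [x]) ! i, (h @ [x]) ! Suc i) \<in> E"
  proof (cases "Suc i < length h")
    case True
    then show ?thesis using assms(1) unfolding is_prefix_def by (simp add: nth_append)
  next
    case False
    then have "i = length h - 1" "h \<noteq> []" using i assms(1) unfolding is_prefix_def by auto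
    then show ?thesis using assms(2) by (simp add: nth_append last_conv_nth)
  qed
qed

lemma is_prefix_last_in:
  assumes "is_prefix E q0 h" "E \<subseteq> V \<times> V" "q0 \<in> V"
  shows "last h \<in> V"
proof (cases "length h = 1")
  case True
  then have "last h = hd h" by (cases h) auto
  then show ?thesis using assms unfolding is_prefix_def by simp
next
  case False
  have "h \<noteq> []" using assms(1) unfolding is_prefix_def by simp
  then have "length h \<noteq> 0" by simp
  then have "2 \<le> length h" using False by linarith
  then have "(h ! (length h - 2), h ! Suc (length h - 2)) \<in> E"
    using assms(1) unfolding is_prefix_def by simp
  moreover have "Suc (length h - 2) = length h - 1" using \<open>2 \<le> length h\<close> by simp
  moreover have "last h = h ! (length h - 1)" using \<open>h \<noteq> []\<close> by (rule last_conv_nth)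
  ultimately show ?thesis using assms(2) by force
qed

locale liminf_game = liminf_arena VE w "{k. real_of_int k \<in> I}"
  for VE :: "'v set" and w :: "'v \<times> 'v \<Rightarrow> int" and I :: "real set" +
  fixes V :: "'v set" and E :: "('v \<times> 'v) set" and q0 :: 'v
  assumes game: "game_graph V VE E w q0"
begin

definition player_vertices :: "bool \<Rightarrow> 'v set" where
  "player_vertices b = (if b then VE else V - VE)"

lemma owns_iff_player_vertices: "u \<in> V \<Longrightarrow> owns b u \<longleftrightarrow> u \<in> player_vertices b"
  unfolding owns_def player_vertices_def by auto

lemma won_payoff: "won b p \<Longrightarrow> (liminf_payoff w p \<in> ereal ` I) = b"
  unfolding won_def using liminf_payoff_eq by auto

lemma arena_game: "arena E V"
proof -
  have "E \<subseteq> V \<times> V" "finite V" using game unfolding game_graph_def by auto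
  then have "finite E" using finite_subset[of E "V \<times> V"] by blast
  then show ?thesis using game unfolding arena_def game_graph_def by blast
qed

lemma positional_strategy_of_dominion:
  assumes dom: "dominion b E W s" and "q0 \<in> W" "W \<subseteq> V"
  shows "\<exists>\<sigma>. positional \<sigma> \<and> is_strategy E q0 (player_vertices b) \<sigma>
    \<and> (\<forall>p. is_play E q0 p \<and> consistent (player_vertices b) \<sigma> p \<longrightarrow> won b p)"
proof -
  define f where "f u = (if u \<in> W then s u else (SOME x. (u, x) \<in> E))" for u
  define \<sigma> where "\<sigma> h = f (last h)" for h
  have conf: "confines b E W s" using dom dominion_def by blast
  have "positional \<sigma>" unfolding positional_def \<sigma>_def by blast
  moreover have "is_strategy E q0 (player_vertices b) \<sigma>"
    unfolding is_strategy_def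
  proof (intro allI impI)
    fix h assume h: "is_prefix E q0 h \<and> last h \<in> player_vertices b"
    have "last h \<in> V" using is_prefix_last_in[of E q0 h V] h game unfolding game_graph_def by blast
    show "(last h, \<sigma> h) \<in> E"
    proof (cases "last h \<in> W")
      case True
      then show ?thesis
        using conf h owns_iff_player_vertices[OF \<open>last h \<in> V\<close>] unfolding confines_def \<sigma>_def f_def by auto
    next
      case False
      have "\<exists>x. (last h, x) \<in> E" using game \<open>last h \<in> V\<close> unfolding game_graph_def by blast
      from someI_ex[OF this] show ?thesis using False unfolding \<sigma>_def f_def by simp
    qed
  qed
  moreover have "won b p" if p: "is_play E q0 p" "consistent (player_vertices b) \<sigma> p" for p
  proof -
    have "follows b s W p" unfolding follows_def
    proof (intro allI impI)
      fix i assume i: "p i \<in> W" "owns b (p i)"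
      then have "p i \<in> player_vertices b" using owns_iff_player_vertices \<open>W \<subseteq> V\<close> by blast
      then show "p (Suc i) = s (p i)" using p(2) i(1) unfolding consistent_def \<sigma>_def f_def by simp
    qed
    then show ?thesis
      using dom p(1) \<open>q0 \<in> W\<close> unfolding dominion_def is_play_def path_in_def by blast
  qed
  ultimately show ?thesis by blast
qed

lemma play_against_confining:
  assumes g: "is_strategy E q0 (player_vertices (\<not> b)) g" and conf: "confines b E W s"
    and "q0 \<in> W" "W \<subseteq> V"
  shows "\<exists>p. is_play E q0 p \<and> consistent (player_vertices (\<not> b)) g p \<and> follows b s W p"
proof -
  let ?P = "player_vertices (\<not> b)"
  have owner: "last h \<in> ?P \<longleftrightarrow> \<not> owns b (last h)" if "last h \<in> W" for h :: "'v list"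
    using owns_iff_player_vertices[of "last h" "\<not> b"] that \<open>W \<subseteq> V\<close> by auto
  define nxt where "nxt h = (if last h \<in> ?P then g h else s (last h))" for h
  define hist where "hist = rec_nat [q0] (\<lambda>_ h. h @ [nxt h])"
  have hist_0: "hist 0 = [q0]" and hist_Suc: "hist (Suc n) = hist n @ [nxt (hist n)]" for n
    unfolding hist_def by simp_all
  have step: "(last h, nxt h) \<in> E \<and> nxt h \<in> W" if "is_prefix E q0 h" "last h \<in> W" for h
  proof (cases "last h \<in> ?P")
    case True
    then have "(last h, g h) \<in> E" using g that(1) unfolding is_strategy_def by blast
    then show ?thesis using conf that(2) True owner[OF that(2)] unfolding confines_def nxt_def by auto
  next
    case False
    then show ?thesis using conf that(2) owner[OF that(2)] unfolding confines_def nxt_def by auto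
  qed
  have hist_prefix: "is_prefix E q0 (hist n) \<and> last (hist n) \<in> W" for n
  proof (induction n)
    case 0
    show ?case using \<open>q0 \<in> W\<close> unfolding hist_0 is_prefix_def by simp
  next
    case (Suc n)
    then show ?case using step[of "hist n"] is_prefix_snoc[of E q0 "hist n"] unfolding hist_Suc by simp
  qed
  define p where "p i = last (hist i)" for i
  have map_p: "map p [0..<Suc i] = hist i" for i
    by (induction i) (simp_all add: p_def hist_0 hist_Suc)
  have p_Suc: "p (Suc i) = nxt (hist i)" for i
    by (simp add: p_def hist_Suc)
  show ?thesis
  proof (intro exI conjI)
    show "is_play E q0 p"
      unfolding is_play_def using step hist_prefix p_Suc by (simp add: p_def hist_0)
    show "consistent ?P g p"
      unfolding consistent_def using map_p p_Suc by (simp add: nxt_def p_def)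
    show "follows b s W p"
      unfolding follows_def using p_Suc owner hist_prefix by (simp add: nxt_def p_def)
  qed
qed

lemma positional_if_winning:
  assumes "is_strategy E q0 (player_vertices b) \<sigma>"
    and "\<forall>p. is_play E q0 p \<and> consistent (player_vertices b) \<sigma> p \<longrightarrow> (liminf_payoff w p \<in> ereal ` I) = b"
  shows "\<exists>\<sigma>. positional \<sigma> \<and> is_strategy E q0 (player_vertices b) \<sigma>
    \<and> (\<forall>p. is_play E q0 p \<and> consistent (player_vertices b) \<sigma> p \<longrightarrow> (liminf_payoff w p \<in> ereal ` I) = b)"
proof -
  obtain W W' s s' where W: "W \<union> W' = V" and s: "dominion b E W s" and s': "dominion (\<not> b) E W' s'"
    using arena_pos_determined[OF arena_game] unfolding pos_determined_iff[of _ _ b] by blast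
  have "q0 \<notin> W'"
  proof
    assume "q0 \<in> W'"
    moreover have "confines (\<not> b) E W' s'" using s' dominion_def by blast
    ultimately obtain p where p: "is_play E q0 p" "consistent (player_vertices b) \<sigma> p" "follows (\<not> b) s' W' p"
      using play_against_confining[of "\<not> b" \<sigma>] assms(1) W by auto
    then have "won (\<not> b) p"
      using s' \<open>q0 \<in> W'\<close> unfolding dominion_def is_play_def path_in_def by blast
    then show False using won_payoff assms(2) p by fastforce
  qed
  then have "q0 \<in> W" using W game unfolding game_graph_def by blast
  then show ?thesis
    using positional_strategy_of_dominion[OF s] W won_payoff by blast
qed

end

theorem mainTheorem2:
  fixes V VE :: "'v set" and E :: "('v \<times> 'v) set" and w :: "'v \<times> 'v \<Rightarrow> int"
    and q0 :: 'v and I :: "real set"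
  assumes "game_graph V VE E w q0"
    and "finite_union_of_intervals I"
  shows "((\<exists>\<sigma>. eve_winning_strategy V VE E w q0 I \<sigma>)
            \<longrightarrow> (\<exists>\<sigma>. positional \<sigma> \<and> eve_winning_strategy V VE E w q0 I \<sigma>))
       \<and> ((\<exists>\<tau>. adam_winning_strategy V VE E w q0 I \<tau>)
            \<longrightarrow> (\<exists>\<tau>. positional \<tau> \<and> adam_winning_strategy V VE E w q0 I \<tau>))"
proof -
  interpret liminf_game VE w I V E q0
    using assms(1) by unfold_locales
  show ?thesis
    using positional_if_winning[of True] positional_if_winning[of False]
    unfolding eve_winning_strategy_def adam_winning_strategy_def player_vertices_def by simp blast
qed

end
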